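(* Let $a(n)=|D_X(A_n)|$. Then as $n\to\infty$ through even values, $a(n)\sim\frac{\sqrt2}{4}\left(\sqrt{2+2\sqrt2}\right)^n$, and as $n\to\infty$ through odd values, $a(n)\sim\frac{\sqrt{\sqrt2-1}}{2}\left(\sqrt{2+2\sqrt2}\right)^n$.
   Context: For $n\ge1$ let $A_n=\{2,4,6,\dots\}\cap\{2,\dots,n-1\}$ (the even numbers strictly between $1$ and $n$; including or excluding $1$ and $n$ does not change the domain). For $A\subseteq[n]$, $D_X(A)$ is the set of all linear orders $q$ on $[n]$ such that for every triple $i<j<k$: if $j\in A$ then $i$ is not ranked last among $\{i,j,k\}$ in $q$, and if $j\notin A$ then $k$ is not ranked first among $\{i,j,k\}$ in $q$. $f\sim g$ means $f/g\to1$. *)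

theory Defs
  imports "HOL-Analysis.Analysis"
begin

text \<open>A linear order q on [n] = {1..n} is a relation with linear_order_on {1..n} q;
  (x,y) \<in> q means x is ranked at or before y (x is weakly preferred to y).\<close>

definition ranked_first :: "nat rel \<Rightarrow> nat \<Rightarrow> nat set \<Rightarrow> bool" where
  "ranked_first q x S \<longleftrightarrow> (\<forall>y\<in>S. (x, y) \<in> q)"

definition ranked_last :: "nat rel \<Rightarrow> nat \<Rightarrow> nat set \<Rightarrow> bool" where
  "ranked_last q x S \<longleftrightarrow> (\<forall>y\<in>S. (y, x) \<in> q)"

definition D_X :: "nat \<Rightarrow> nat set \<Rightarrow> nat rel set" where
  "D_X n A = {q. linear_order_on {1..n} q \<and>
     (\<forall>i j k. 1 \<le> i \<and> i < j \<and> j < k \<and> k \<le> n \<longrightarrow>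
        (j \<in> A \<longrightarrow> \<not> ranked_last q i {i, j, k}) \<and>
        (j \<notin> A \<longrightarrow> \<not> ranked_first q k {i, j, k}))}"

definition A_set :: "nat \<Rightarrow> nat set" where
  "A_set n = {j. even j \<and> 2 \<le> j \<and> j \<le> n - 1}"

definition a_count :: "nat \<Rightarrow> nat" where
  "a_count n = card (D_X n (A_set n))"

end

(*
  Decompose an admissible order by its top-ranked element.  For the family of "staircase"
  configurations (stair k N, in which the even numbers below 2k must stay in increasing order)
  only two or three elements can be on top, and removing one of them leaves a configuration of the
  same family.  The staircase counts therefore satisfy a recurrence that determines them, and
  a(n) is the count for k = 1.  The recurrence is solved by the coefficients of A(x) C(x)^k,
  where C is the Catalan series and A is built from B(x) = sum b_m x^m with
  (2B - 1)(1 - 4x - 4x^2) = 1 + 2x - 2x C; this gives a(2m) = b_m and a(2m+1) = 2 b_m.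
  Finally b_m x0^m converges to sqrt 2 / 4 for x0 = 1 / (2 + 2 sqrt 2), because the root
  2 - 2 sqrt 2 of t^2 = 4t + 4 is smaller than 1 / x0 in modulus and C(x0) = sqrt 2.
*)

theory Submission
  imports Defs "HOL-Computational_Algebra.Formal_Power_Series"
begin

lemma linear_order_on_iff:
  "linear_order_on S q \<longleftrightarrow> q \<subseteq> S \<times> S \<and> (\<forall>x\<in>S. (x, x) \<in> q) \<and>
     (\<forall>a b c. (a, b) \<in> q \<longrightarrow> (b, c) \<in> q \<longrightarrow> (a, c) \<in> q) \<and>
     (\<forall>a b. (a, b) \<in> q \<longrightarrow> (b, a) \<in> q \<longrightarrow> a = b) \<and>
     (\<forall>x\<in>S. \<forall>y\<in>S. x \<noteq> y \<longrightarrow> (x, y) \<in> q \<or> (y, x) \<in> q)"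
  unfolding order_on_defs refl_on_def total_on_def antisym_on_def trans_on_def
  by (simp only: ball_UNIV conj_assoc)

lemma linear_order_onD:
  assumes "linear_order_on S q"
  shows linear_order_on_subset: "q \<subseteq> S \<times> S"
    and linear_order_on_refl: "x \<in> S \<Longrightarrow> (x, x) \<in> q"
    and linear_order_on_trans: "(a, b) \<in> q \<Longrightarrow> (b, c) \<in> q \<Longrightarrow> (a, c) \<in> q"
    and linear_order_on_antisym: "(a, b) \<in> q \<Longrightarrow> (b, a) \<in> q \<Longrightarrow> a = b"
    and linear_order_on_total: "x \<in> S \<Longrightarrow> y \<in> S \<Longrightarrow> x \<noteq> y \<Longrightarrow> (x, y) \<in> q \<or> (y, x) \<in> q"
  using assms unfolding linear_order_on_iff by simp_all

lemma linear_order_onI: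
  assumes "q \<subseteq> S \<times> S"
    and "\<And>x. x \<in> S \<Longrightarrow> (x, x) \<in> q"
    and "\<And>a b c. (a, b) \<in> q \<Longrightarrow> (b, c) \<in> q \<Longrightarrow> (a, c) \<in> q"
    and "\<And>a b. (a, b) \<in> q \<Longrightarrow> (b, a) \<in> q \<Longrightarrow> a = b"
    and "\<And>x y. x \<in> S \<Longrightarrow> y \<in> S \<Longrightarrow> x \<noteq> y \<Longrightarrow> (x, y) \<in> q \<or> (y, x) \<in> q"
  shows "linear_order_on S q"
  unfolding linear_order_on_iff using assms by simp

lemma linear_order_on_Restr_subset:
  assumes lin: "linear_order_on S q" and "T \<subseteq> S"
  shows "linear_order_on T (Restr q T)"
proof (rule linear_order_onI)
  show "\<And>x y. x \<in> T \<Longrightarrow> y \<in> T \<Longrightarrow> x \<noteq> y \<Longrightarrow> (x, y) \<in> Restr q T \<or> (y, x) \<in> Restr q T"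
    using linear_order_on_total[OF lin] \<open>T \<subseteq> S\<close> by blast
qed (use linear_order_onD[OF lin] \<open>T \<subseteq> S\<close> in auto)

lemma linear_order_on_has_top:
  assumes lin: "linear_order_on S q" and "finite T" "T \<noteq> {}" "T \<subseteq> S"
  shows "\<exists>x\<in>T. \<forall>y\<in>T. (x, y) \<in> q"
  using \<open>finite T\<close> \<open>T \<noteq> {}\<close> \<open>T \<subseteq> S\<close>
proof (induction T rule: finite_ne_induct)
  case (singleton x)
  then show ?case using linear_order_on_refl[OF lin] by auto
next
  case (insert a F)
  then obtain t where t: "t \<in> F" "\<forall>y\<in>F. (t, y) \<in> q" by auto
  show ?case
  proof (cases "(a, t) \<in> q")
    case True
    then have "\<forall>y\<in>insert a F. (a, y) \<in> q"
      using t insert.prems linear_order_on_refl[OF lin] linear_order_on_trans[OF lin] by blast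
    then show ?thesis by blast
  next
    case False
    then have "(t, a) \<in> q"
      using linear_order_on_total[OF lin, of a t] t insert by auto
    then show ?thesis using t by auto
  qed
qed

section \<open>Admissible orders\<close>

text \<open>For \<open>i < j < k\<close>, an even middle
  element forbids \<open>i\<close> to be ranked last and an odd one forbids \<open>k\<close> to be ranked first among
  \<open>{i, j, k}\<close>: on \<open>{1..n}\<close> this is the domain \<open>D_X n (A_set n)\<close>.\<close>

definition admissible :: "nat set \<Rightarrow> nat rel \<Rightarrow> bool" where
  "admissible S q \<longleftrightarrow> (\<forall>i\<in>S. \<forall>j\<in>S. \<forall>k\<in>S. i < j \<longrightarrow> j < k \<longrightarrow>
      (even j \<longrightarrow> (i, j) \<in> q \<or> (i, k) \<in> q) \<and> (odd j \<longrightarrow> (i, k) \<in> q \<or> (j, k) \<in> q))"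

definition increasing_on :: "nat set \<Rightarrow> nat rel \<Rightarrow> bool" where
  "increasing_on C q \<longleftrightarrow> (\<forall>i\<in>C. \<forall>j\<in>C. i < j \<longrightarrow> (i, j) \<in> q)"

definition adm_orders :: "nat set \<Rightarrow> nat set \<Rightarrow> nat rel set" where
  "adm_orders S C = {q. linear_order_on S q \<and> admissible S q \<and> increasing_on C q}"

lemma D_X_condition_iff:
  assumes lin: "linear_order_on {1..n} q" and "1 \<le> i" "i < j" "j < k" "k \<le> n"
  shows "(j \<in> A_set n \<longrightarrow> \<not> ranked_last q i {i, j, k}) \<and> (j \<notin> A_set n \<longrightarrow> \<not> ranked_first q k {i, j, k})
    \<longleftrightarrow> (even j \<longrightarrow> (i, j) \<in> q \<or> (i, k) \<in> q) \<and> (odd j \<longrightarrow> (i, k) \<in> q \<or> (j, k) \<in> q)"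
proof -
  have "j \<in> A_set n \<longleftrightarrow> even j" using assms by (auto simp: A_set_def)
  moreover have "(b, a) \<notin> q \<longleftrightarrow> (a, b) \<in> q" if "a \<in> {1..n}" "b \<in> {1..n}" "a \<noteq> b" for a b
    using linear_order_onD(4,5)[OF lin] that by blast
  ultimately show ?thesis
    using assms linear_order_on_refl[OF lin] by (auto simp: ranked_last_def ranked_first_def)
qed

lemma D_X_A_set_eq_adm_orders: "D_X n (A_set n) = adm_orders {1..n} {}"
proof (rule set_eqI)
  fix q
  have triples: "(\<forall>i j k. 1 \<le> i \<and> i < j \<and> j < k \<and> k \<le> n \<longrightarrow> P i j k) \<longleftrightarrow>
      (\<forall>i\<in>{1..n}. \<forall>j\<in>{1..n}. \<forall>k\<in>{1..n}. i < j \<longrightarrow> j < k \<longrightarrow> P i j k)" for P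
    by auto
  show "q \<in> D_X n (A_set n) \<longleftrightarrow> q \<in> adm_orders {1..n} {}"
  proof (cases "linear_order_on {1..n} q")
    case True
    then have "(\<forall>i j k. 1 \<le> i \<and> i < j \<and> j < k \<and> k \<le> n \<longrightarrow>
        (j \<in> A_set n \<longrightarrow> \<not> ranked_last q i {i, j, k}) \<and> (j \<notin> A_set n \<longrightarrow> \<not> ranked_first q k {i, j, k}))
      \<longleftrightarrow> (\<forall>i j k. 1 \<le> i \<and> i < j \<and> j < k \<and> k \<le> n \<longrightarrow>
        (even j \<longrightarrow> (i, j) \<in> q \<or> (i, k) \<in> q) \<and> (odd j \<longrightarrow> (i, k) \<in> q \<or> (j, k) \<in> q))"
      using D_X_condition_iff by blast
    also have "\<dots> \<longleftrightarrow> admissible {1..n} q"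
      unfolding admissible_def by (rule triples)
    finally show ?thesis
      using True by (simp add: D_X_def adm_orders_def increasing_on_def)
  next
    case False
    then show ?thesis unfolding D_X_def adm_orders_def by blast
  qed
qed

lemma admissible_Restr:
  assumes adm: "admissible S q" and "T \<subseteq> S"
  shows "admissible T (Restr q T)"
  unfolding admissible_def
proof (intro ballI impI)
  fix i j k assume ijk: "i \<in> T" "j \<in> T" "k \<in> T" "i < j" "j < k"
  then show "(even j \<longrightarrow> (i, j) \<in> Restr q T \<or> (i, k) \<in> Restr q T) \<and>
      (odd j \<longrightarrow> (i, k) \<in> Restr q T \<or> (j, k) \<in> Restr q T)"
    using adm[unfolded admissible_def, rule_format, of i j k] \<open>T \<subseteq> S\<close> by auto
qed

lemma adm_orders_empty: "adm_orders {} {} = {{}}"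
  by (auto simp: adm_orders_def admissible_def increasing_on_def dest: linear_order_on_subset)

lemma finite_adm_orders: "finite S \<Longrightarrow> finite (adm_orders S C)"
  by (rule finite_subset[of _ "Pow (S \<times> S)"])
    (auto simp: adm_orders_def dest: linear_order_on_subset)

lemma adm_orders_singleton: "adm_orders S {a} = adm_orders S {}"
  by (simp add: adm_orders_def increasing_on_def)

definition put_on_top :: "nat \<Rightarrow> nat set \<Rightarrow> nat rel \<Rightarrow> nat rel" where
  "put_on_top x S q = q \<union> {x} \<times> S"

lemma linear_order_on_put_on_top:
  assumes lin: "linear_order_on (S - {x}) q" and "x \<in> S"
  shows "linear_order_on S (put_on_top x S q)"
proof (rule linear_order_onI)
  note sub = linear_order_on_subset[OF lin]
  show "put_on_top x S q \<subseteq> S \<times> S" using sub \<open>x \<in> S\<close> by (auto simp: put_on_top_def)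
  show "\<And>a b c. (a, b) \<in> put_on_top x S q \<Longrightarrow> (b, c) \<in> put_on_top x S q \<Longrightarrow> (a, c) \<in> put_on_top x S q"
    using linear_order_on_trans[OF lin] sub by (auto simp: put_on_top_def)
  show "\<And>a b. (a, b) \<in> put_on_top x S q \<Longrightarrow> (b, a) \<in> put_on_top x S q \<Longrightarrow> a = b"
    using linear_order_on_antisym[OF lin] sub by (auto simp: put_on_top_def)
  show "\<And>a b. a \<in> S \<Longrightarrow> b \<in> S \<Longrightarrow> a \<noteq> b \<Longrightarrow>
      (a, b) \<in> put_on_top x S q \<or> (b, a) \<in> put_on_top x S q"
    unfolding put_on_top_def using linear_order_on_total[OF lin] by blast
qed (use linear_order_on_refl[OF lin] in \<open>auto simp: put_on_top_def\<close>)

lemma Restr_put_on_top: "q \<subseteq> (S - {x}) \<times> (S - {x}) \<Longrightarrow> Restr (put_on_top x S q) (S - {x}) = q"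
  by (auto simp: put_on_top_def)

lemma put_on_top_Restr:
  assumes lin: "linear_order_on S q" and top: "\<forall>y\<in>S. (x, y) \<in> q"
  shows "put_on_top x S (Restr q (S - {x})) = q"
proof -
  have "(a, x) \<in> q \<Longrightarrow> a = x" for a
    using top linear_order_on_subset[OF lin] linear_order_on_antisym[OF lin] by blast
  then show ?thesis
    using top linear_order_on_subset[OF lin] by (auto simp: put_on_top_def)
qed

definition top_admissible :: "nat set \<Rightarrow> nat \<Rightarrow> nat rel \<Rightarrow> bool" where
  "top_admissible S x q \<longleftrightarrow> (\<forall>i\<in>S. \<forall>j\<in>S. i < j \<longrightarrow> j < x \<longrightarrow> even j \<and> (i, j) \<in> q) \<and>
     (even x \<longrightarrow> (\<forall>i\<in>S. \<forall>k\<in>S. i < x \<longrightarrow> x < k \<longrightarrow> (i, k) \<in> q))"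

lemma in_put_on_top_iff: "(a, b) \<in> put_on_top x S q \<longleftrightarrow> (a, b) \<in> q \<or> (a = x \<and> b \<in> S)"
  by (auto simp: put_on_top_def)

lemma admissible_put_on_topD:
  assumes sub: "q \<subseteq> (S - {x}) \<times> (S - {x})" and "x \<in> S"
    and adm: "admissible S (put_on_top x S q)"
  shows "admissible (S - {x}) q \<and> top_admissible S x q"
proof -
  note triple = adm[unfolded admissible_def, rule_format]
  have not_below_top: "(a, x) \<notin> q" for a
    using sub by auto
  have "admissible (S - {x}) q"
    unfolding admissible_def
  proof (intro ballI impI)
    fix i j k assume "i \<in> S - {x}" "j \<in> S - {x}" "k \<in> S - {x}" "i < j" "j < k"
    then show "(even j \<longrightarrow> (i, j) \<in> q \<or> (i, k) \<in> q) \<and> (odd j \<longrightarrow> (i, k) \<in> q \<or> (j, k) \<in> q)"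
      using triple[of i j k] by (simp add: in_put_on_top_iff)
  qed
  moreover have "even j \<and> (i, j) \<in> q" if "i \<in> S" "j \<in> S" "i < j" "j < x" for i j
    using triple[of i j x] that \<open>x \<in> S\<close> not_below_top by (simp add: in_put_on_top_iff)
  moreover have "(i, k) \<in> q" if "even x" "i \<in> S" "k \<in> S" "i < x" "x < k" for i k
    using triple[of i x k] that \<open>x \<in> S\<close> not_below_top by (simp add: in_put_on_top_iff)
  ultimately show ?thesis
    unfolding top_admissible_def by blast
qed

lemma admissible_put_on_topI:
  assumes adm: "admissible (S - {x}) q" and "top_admissible S x q"
  shows "admissible S (put_on_top x S q)"
  unfolding admissible_def
proof (intro ballI impI)
  have below: "\<And>i j. i \<in> S \<Longrightarrow> j \<in> S \<Longrightarrow> i < j \<Longrightarrow> j < x \<Longrightarrow> even j \<and> (i, j) \<in> q"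
    and across: "\<And>i k. even x \<Longrightarrow> i \<in> S \<Longrightarrow> k \<in> S \<Longrightarrow> i < x \<Longrightarrow> x < k \<Longrightarrow> (i, k) \<in> q"
    using \<open>top_admissible S x q\<close> unfolding top_admissible_def by blast+
  fix i j k assume ijk: "i \<in> S" "j \<in> S" "k \<in> S" "i < j" "j < k"
  consider "i = x" | "j = x" | "k = x" | "i \<noteq> x" "j \<noteq> x" "k \<noteq> x" by blast
  then show "(even j \<longrightarrow> (i, j) \<in> put_on_top x S q \<or> (i, k) \<in> put_on_top x S q) \<and>
      (odd j \<longrightarrow> (i, k) \<in> put_on_top x S q \<or> (j, k) \<in> put_on_top x S q)"
  proof cases
    case 1
    then show ?thesis using ijk by (simp add: in_put_on_top_iff)
  next
    case 2
    then show ?thesis using ijk across[of i k] by (simp add: in_put_on_top_iff)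
  next
    case 3
    then show ?thesis using ijk below[of i j] by (simp add: in_put_on_top_iff)
  next
    case 4
    then show ?thesis
      using ijk adm[unfolded admissible_def, rule_format, of i j k] by (simp add: in_put_on_top_iff)
  qed
qed

lemma increasing_on_put_on_top_iff:
  assumes sub: "q \<subseteq> (S - {x}) \<times> (S - {x})" and "C \<subseteq> S"
  shows "increasing_on C (put_on_top x S q) \<longleftrightarrow> increasing_on (C - {x}) q \<and> (x \<in> C \<longrightarrow> (\<forall>i\<in>C. x \<le> i))"
proof -
  have not_below_top: "(a, x) \<notin> q" for a
    using sub by auto
  show ?thesis
  proof
    assume "increasing_on C (put_on_top x S q)"
    then have inc: "(i, j) \<in> q \<or> i = x" if "i \<in> C" "j \<in> C" "i < j" for i j
      using that unfolding increasing_on_def in_put_on_top_iff by blast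
    have "x \<le> i" if "x \<in> C" "i \<in> C" for i
    proof (rule ccontr)
      assume "\<not> x \<le> i"
      then show False using inc[OF \<open>i \<in> C\<close> \<open>x \<in> C\<close>] not_below_top by simp
    qed
    moreover have "increasing_on (C - {x}) q"
      using inc unfolding increasing_on_def by blast
    ultimately show "increasing_on (C - {x}) q \<and> (x \<in> C \<longrightarrow> (\<forall>i\<in>C. x \<le> i))" by blast
  next
    assume h: "increasing_on (C - {x}) q \<and> (x \<in> C \<longrightarrow> (\<forall>i\<in>C. x \<le> i))"
    show "increasing_on C (put_on_top x S q)"
      unfolding increasing_on_def in_put_on_top_iff
    proof (intro ballI impI)
      fix i j assume ij: "i \<in> C" "j \<in> C" "i < j"
      show "(i, j) \<in> q \<or> i = x \<and> j \<in> S"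
      proof (cases "i = x")
        case True
        then show ?thesis using ij \<open>C \<subseteq> S\<close> by auto
      next
        case False
        have "j \<noteq> x" using h ij by auto
        with False ij h show ?thesis unfolding increasing_on_def by blast
      qed
    qed
  qed
qed

definition adm_orders_top :: "nat set \<Rightarrow> nat set \<Rightarrow> nat \<Rightarrow> nat rel set" where
  "adm_orders_top S C x = {q \<in> adm_orders S C. \<forall>y\<in>S. (x, y) \<in> q}"

lemma put_on_top_in_adm_orders_iff:
  assumes lin: "linear_order_on (S - {x}) q" and "x \<in> S" "C \<subseteq> S"
    and min: "x \<in> C \<Longrightarrow> \<forall>i\<in>C. x \<le> i"
  shows "put_on_top x S q \<in> adm_orders S C \<longleftrightarrow> q \<in> adm_orders (S - {x}) (C - {x}) \<and> top_admissible S x q"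
proof -
  note sub = linear_order_on_subset[OF lin]
  have "put_on_top x S q \<in> adm_orders S C \<longleftrightarrow>
      admissible S (put_on_top x S q) \<and> increasing_on C (put_on_top x S q)"
    using linear_order_on_put_on_top[OF lin \<open>x \<in> S\<close>] by (simp add: adm_orders_def)
  also have "\<dots> \<longleftrightarrow> (admissible (S - {x}) q \<and> top_admissible S x q) \<and> increasing_on (C - {x}) q"
    using admissible_put_on_topD[OF sub \<open>x \<in> S\<close>] admissible_put_on_topI
      increasing_on_put_on_top_iff[OF sub \<open>C \<subseteq> S\<close>] min
    by blast
  finally show ?thesis using lin by (auto simp: adm_orders_def)
qed

lemma card_adm_orders_top:
  assumes "x \<in> S" "C \<subseteq> S" and min: "x \<in> C \<Longrightarrow> \<forall>i\<in>C. x \<le> i"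
  shows "card (adm_orders_top S C x) = card {q \<in> adm_orders (S - {x}) (C - {x}). top_admissible S x q}"
proof -
  note put_on_top_in = put_on_top_in_adm_orders_iff[OF _ assms]
  have "bij_betw (put_on_top x S) {q \<in> adm_orders (S - {x}) (C - {x}). top_admissible S x q}
      (adm_orders_top S C x)"
  proof (rule bij_betw_byWitness[where f' = "\<lambda>q. Restr q (S - {x})"])
    show "\<forall>q\<in>{q \<in> adm_orders (S - {x}) (C - {x}). top_admissible S x q}.
        Restr (put_on_top x S q) (S - {x}) = q"
      using Restr_put_on_top[OF linear_order_on_subset] by (simp add: adm_orders_def)
    show "\<forall>q\<in>adm_orders_top S C x. put_on_top x S (Restr q (S - {x})) = q"
      using put_on_top_Restr by (simp add: adm_orders_top_def adm_orders_def)
    show "put_on_top x S ` {q \<in> adm_orders (S - {x}) (C - {x}). top_admissible S x q}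
        \<subseteq> adm_orders_top S C x"
    proof clarify
      fix q assume "q \<in> adm_orders (S - {x}) (C - {x})" "top_admissible S x q"
      moreover have "\<forall>y\<in>S. (x, y) \<in> put_on_top x S q" by (simp add: put_on_top_def)
      ultimately show "put_on_top x S q \<in> adm_orders_top S C x"
        using put_on_top_in by (simp add: adm_orders_def adm_orders_top_def)
    qed
    show "(\<lambda>q. Restr q (S - {x})) ` adm_orders_top S C x
        \<subseteq> {q \<in> adm_orders (S - {x}) (C - {x}). top_admissible S x q}"
    proof clarify
      fix q assume q: "q \<in> adm_orders_top S C x"
      then have lin: "linear_order_on S q" and top: "\<forall>y\<in>S. (x, y) \<in> q"
        by (auto simp: adm_orders_top_def adm_orders_def)
      have "linear_order_on (S - {x}) (Restr q (S - {x}))"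
        using linear_order_on_Restr_subset[OF lin] by blast
      moreover have "put_on_top x S (Restr q (S - {x})) \<in> adm_orders S C"
        using q put_on_top_Restr[OF lin top] by (simp add: adm_orders_top_def)
      ultimately show "Restr q (S - {x}) \<in> adm_orders (S - {x}) (C - {x}) \<and>
          top_admissible S x (Restr q (S - {x}))"
        using put_on_top_in by blast
    qed
  qed
  then show ?thesis by (simp add: bij_betw_same_card)
qed

lemma card_adm_orders_sum_top:
  assumes "finite S" "S \<noteq> {}"
  shows "card (adm_orders S C) = (\<Sum>x\<in>S. card (adm_orders_top S C x))"
proof -
  have "adm_orders S C \<subseteq> (\<Union>x\<in>S. adm_orders_top S C x)"
  proof
    fix q assume q: "q \<in> adm_orders S C"
    then have "linear_order_on S q" by (simp add: adm_orders_def)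
    then obtain x where "x \<in> S" "\<forall>y\<in>S. (x, y) \<in> q"
      using linear_order_on_has_top[OF _ assms order.refl] by blast
    with q show "q \<in> (\<Union>x\<in>S. adm_orders_top S C x)" by (auto simp: adm_orders_top_def)
  qed
  then have "adm_orders S C = (\<Union>x\<in>S. adm_orders_top S C x)"
    by (auto simp: adm_orders_top_def)
  moreover have "card (\<Union>x\<in>S. adm_orders_top S C x) = (\<Sum>x\<in>S. card (adm_orders_top S C x))"
  proof (rule card_UN_disjoint[OF \<open>finite S\<close>])
    show "\<forall>x\<in>S. finite (adm_orders_top S C x)"
      using finite_adm_orders[OF \<open>finite S\<close>] by (simp add: adm_orders_top_def)
    show "\<forall>x\<in>S. \<forall>y\<in>S. x \<noteq> y \<longrightarrow> adm_orders_top S C x \<inter> adm_orders_top S C y = {}"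
      by (auto simp: adm_orders_top_def adm_orders_def dest: linear_order_on_antisym)
  qed
  ultimately show ?thesis by simp
qed

lemma card_adm_orders_sum_tops:
  assumes "finite S" "T \<subseteq> S" "T \<noteq> {}" and "\<And>x. x \<in> S - T \<Longrightarrow> adm_orders_top S C x = {}"
  shows "card (adm_orders S C) = (\<Sum>x\<in>T. card (adm_orders_top S C x))"
proof -
  have "card (adm_orders S C) = (\<Sum>x\<in>S. card (adm_orders_top S C x))"
    using assms by (intro card_adm_orders_sum_top) auto
  also have "\<dots> = (\<Sum>x\<in>T. card (adm_orders_top S C x))"
    using assms by (intro sum.mono_neutral_right) auto
  finally show ?thesis .
qed

lemma adm_orders_top_increasing_empty:
  assumes "i \<in> C" "x \<in> C" "i < x" "C \<subseteq> S"
  shows "adm_orders_top S C x = {}"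
proof (rule equals0I)
  fix q assume "q \<in> adm_orders_top S C x"
  then have "linear_order_on S q" "(i, x) \<in> q" "(x, i) \<in> q"
    using assms by (auto simp: adm_orders_top_def adm_orders_def increasing_on_def)
  then have "i = x" by (rule linear_order_on_antisym)
  with \<open>i < x\<close> show False by simp
qed

lemma adm_orders_top_odd_below_empty:
  assumes "i \<in> S" "j \<in> S" "x \<in> S" "i < j" "j < x" "odd j"
  shows "adm_orders_top S C x = {}"
proof (rule equals0I)
  fix q assume "q \<in> adm_orders_top S C x"
  then have lin: "linear_order_on S q" and "admissible S q" and top: "\<forall>y\<in>S. (x, y) \<in> q"
    by (auto simp: adm_orders_top_def adm_orders_def)
  then have "(i, x) \<in> q \<or> (j, x) \<in> q"
    using assms unfolding admissible_def by blast
  then have "i = x \<or> j = x"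
    using top assms linear_order_on_antisym[OF lin] by blast
  with assms show False by simp
qed

lemma in_map_prod_image_iff:
  assumes "inj_on h S" "q \<subseteq> S \<times> S" "a \<in> S" "b \<in> S"
  shows "(h a, h b) \<in> map_prod h h ` q \<longleftrightarrow> (a, b) \<in> q"
proof
  assume "(h a, h b) \<in> map_prod h h ` q"
  then obtain a' b' where "(a', b') \<in> q" "h a' = h a" "h b' = h b" by auto
  with assms have "a' = a" "b' = b" by (auto dest: inj_onD)
  with \<open>(a', b') \<in> q\<close> show "(a, b) \<in> q" by simp
qed force

lemma linear_order_on_map_prod_image:
  assumes lin: "linear_order_on S q" and inj: "inj_on h S"
  shows "linear_order_on (h ` S) (map_prod h h ` q)"
proof (rule linear_order_onI)
  note sub = linear_order_on_subset[OF lin]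
  note mem = in_map_prod_image_iff[OF inj sub]
  show img: "map_prod h h ` q \<subseteq> h ` S \<times> h ` S" using sub by auto
  show "\<And>x. x \<in> h ` S \<Longrightarrow> (x, x) \<in> map_prod h h ` q"
    using linear_order_on_refl[OF lin] by auto
  show "(a, c) \<in> map_prod h h ` q"
    if "(a, b) \<in> map_prod h h ` q" "(b, c) \<in> map_prod h h ` q" for a b c
  proof -
    have "a \<in> h ` S" "b \<in> h ` S" "c \<in> h ` S" using that img by auto
    then obtain a' b' c' where abc: "a' \<in> S" "b' \<in> S" "c' \<in> S" "a = h a'" "b = h b'" "c = h c'"
      by blast
    with that have "(a', b') \<in> q" "(b', c') \<in> q" using mem by simp_all
    then have "(a', c') \<in> q" by (rule linear_order_on_trans[OF lin])
    then show ?thesis using mem abc by simp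
  qed
  show "a = b" if "(a, b) \<in> map_prod h h ` q" "(b, a) \<in> map_prod h h ` q" for a b
  proof -
    have "a \<in> h ` S" "b \<in> h ` S" using that img by auto
    then obtain a' b' where ab: "a' \<in> S" "b' \<in> S" "a = h a'" "b = h b'"
      by blast
    with that have "(a', b') \<in> q" "(b', a') \<in> q" using mem by simp_all
    then have "a' = b'" by (rule linear_order_on_antisym[OF lin])
    then show ?thesis using ab by simp
  qed
  show "\<And>x y. x \<in> h ` S \<Longrightarrow> y \<in> h ` S \<Longrightarrow> x \<noteq> y \<Longrightarrow>
      (x, y) \<in> map_prod h h ` q \<or> (y, x) \<in> map_prod h h ` q"
    using mem linear_order_on_total[OF lin] by fastforce
qed

lemma map_prod_image_in_adm_orders:
  assumes mono: "strict_mono_on S h"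
    and parity: "\<forall>i\<in>S. \<forall>j\<in>S. i < j \<longrightarrow> (even (h j) \<longleftrightarrow> even j)"
    and "C \<subseteq> S" and q: "q \<in> adm_orders S C"
  shows "map_prod h h ` q \<in> adm_orders (h ` S) (h ` C)"
proof -
  have inj: "inj_on h S" using mono by (rule strict_mono_on_imp_inj_on)
  have lin: "linear_order_on S q" using q by (simp add: adm_orders_def)
  note mem = in_map_prod_image_iff[OF inj linear_order_on_subset[OF lin]]
  have less: "h a < h b \<longleftrightarrow> a < b" if "a \<in> S" "b \<in> S" for a b
    using strict_mono_on_less[OF mono that] .
  have "admissible (h ` S) (map_prod h h ` q)"
    unfolding admissible_def
  proof (intro ballI impI)
    fix i' j' k' assume "i' \<in> h ` S" "j' \<in> h ` S" "k' \<in> h ` S" "i' < j'" "j' < k'"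
    then obtain i j k where ijk: "i \<in> S" "j \<in> S" "k \<in> S" "i' = h i" "j' = h j" "k' = h k"
      by blast
    with \<open>i' < j'\<close> \<open>j' < k'\<close> have "i < j" "j < k" using less by auto
    with ijk q have "(even j \<longrightarrow> (i, j) \<in> q \<or> (i, k) \<in> q) \<and> (odd j \<longrightarrow> (i, k) \<in> q \<or> (j, k) \<in> q)"
      unfolding adm_orders_def admissible_def by blast
    moreover have "even (h j) \<longleftrightarrow> even j"
      using parity ijk \<open>i < j\<close> by blast
    ultimately show "(even j' \<longrightarrow> (i', j') \<in> map_prod h h ` q \<or> (i', k') \<in> map_prod h h ` q) \<and>
        (odd j' \<longrightarrow> (i', k') \<in> map_prod h h ` q \<or> (j', k') \<in> map_prod h h ` q)"
      using mem[of i j] mem[of i k] mem[of j k] ijk by simp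
  qed
  moreover have "increasing_on (h ` C) (map_prod h h ` q)"
    unfolding increasing_on_def
  proof (intro ballI impI)
    fix i' j' assume "i' \<in> h ` C" "j' \<in> h ` C" "i' < j'"
    then obtain i j where ij: "i \<in> C" "j \<in> C" "i' = h i" "j' = h j" by blast
    with \<open>C \<subseteq> S\<close> have "i \<in> S" "j \<in> S" by auto
    with ij \<open>i' < j'\<close> have "i < j" using less by simp
    with ij q have "(i, j) \<in> q" by (simp add: adm_orders_def increasing_on_def)
    then show "(i', j') \<in> map_prod h h ` q" using mem ij \<open>i \<in> S\<close> \<open>j \<in> S\<close> by simp
  qed
  ultimately show ?thesis
    using linear_order_on_map_prod_image[OF lin inj] by (simp add: adm_orders_def)
qed

lemma map_prod_image_left_inverse:
  assumes "\<And>a. a \<in> S \<Longrightarrow> g (h a) = a" and "q \<subseteq> S \<times> S"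
  shows "map_prod g g ` map_prod h h ` q = q"
proof -
  have "map_prod g g (map_prod h h p) = p" if "p \<in> q" for p
    using that assms by (cases p) auto
  then show ?thesis by (simp add: image_image cong: image_cong)
qed

lemma card_adm_orders_image:
  assumes mono: "strict_mono_on S h"
    and parity: "\<forall>i\<in>S. \<forall>j\<in>S. i < j \<longrightarrow> (even (h j) \<longleftrightarrow> even j)"
    and "C \<subseteq> S"
  shows "card (adm_orders (h ` S) (h ` C)) = card (adm_orders S C)"
proof -
  define g where "g = inv_into S h"
  have inj: "inj_on h S" using mono by (rule strict_mono_on_imp_inj_on)
  have gh: "g (h a) = a" if "a \<in> S" for a using inj that by (simp add: g_def)
  have hg: "h (g b) = b" if "b \<in> h ` S" for b using that by (simp add: g_def f_inv_into_f)
  have less: "h a < h b \<longleftrightarrow> a < b" if "a \<in> S" "b \<in> S" for a b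
    using strict_mono_on_less[OF mono that] .
  have g_mono: "strict_mono_on (h ` S) g"
    by (rule strict_mono_onI) (auto simp: gh less)
  have g_parity: "\<forall>i\<in>h ` S. \<forall>j\<in>h ` S. i < j \<longrightarrow> (even (g j) \<longleftrightarrow> even j)"
    using parity less gh by auto
  have g_image: "g ` h ` S = S" "g ` h ` C = C"
    using gh \<open>C \<subseteq> S\<close> by (force simp: image_image)+
  note map_inverse = map_prod_image_left_inverse[of S g h, OF gh]
    and map_inverse' = map_prod_image_left_inverse[of "h ` S" h g, OF hg]
  have "bij_betw (\<lambda>q. map_prod h h ` q) (adm_orders S C) (adm_orders (h ` S) (h ` C))"
  proof (rule bij_betw_byWitness[where f' = "\<lambda>q. map_prod g g ` q"])
    show "\<forall>q\<in>adm_orders S C. map_prod g g ` map_prod h h ` q = q"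
      by (auto simp: adm_orders_def intro!: map_inverse linear_order_on_subset)
    show "\<forall>q\<in>adm_orders (h ` S) (h ` C). map_prod h h ` map_prod g g ` q = q"
      by (auto simp: adm_orders_def intro!: map_inverse' linear_order_on_subset)
    show "(\<lambda>q. map_prod h h ` q) ` adm_orders S C \<subseteq> adm_orders (h ` S) (h ` C)"
      using map_prod_image_in_adm_orders[OF mono parity \<open>C \<subseteq> S\<close>] by blast
    show "(\<lambda>q. map_prod g g ` q) ` adm_orders (h ` S) (h ` C) \<subseteq> adm_orders S C"
      using map_prod_image_in_adm_orders[OF g_mono g_parity, of "h ` C"] \<open>C \<subseteq> S\<close>
      unfolding g_image by blast
  qed
  then show ?thesis by (simp add: bij_betw_same_card)
qed

definition prepend_sorted :: "nat set \<Rightarrow> nat set \<Rightarrow> nat rel \<Rightarrow> nat rel" where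
  "prepend_sorted L R q = {(a, b). a \<in> L \<and> b \<in> L \<and> a \<le> b} \<union> L \<times> R \<union> q"

lemma in_prepend_sorted_iff:
  "(a, b) \<in> prepend_sorted L R q \<longleftrightarrow> (a \<in> L \<and> b \<in> L \<and> a \<le> b) \<or> (a \<in> L \<and> b \<in> R) \<or> (a, b) \<in> q"
  by (auto simp: prepend_sorted_def)

lemma prepend_sorted_Restr:
  assumes LR: "\<forall>l\<in>L. \<forall>r\<in>R. l < r" and q: "q \<in> adm_orders (L \<union> R) L" "L \<times> R \<subseteq> q"
  shows "prepend_sorted L R (Restr q R) = q"
proof -
  from q have lin: "linear_order_on (L \<union> R) q" and inc: "increasing_on L q"
    by (auto simp: adm_orders_def)
  have "(a, b) \<in> q" if "a \<in> L" "b \<in> L" "a \<le> b" for a b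
    using that inc linear_order_on_refl[OF lin] by (cases "a = b") (auto simp: increasing_on_def)
  moreover have "(a, b) \<in> prepend_sorted L R (Restr q R)" if "(a, b) \<in> q" for a b
  proof -
    have ab: "a \<in> L \<union> R" "b \<in> L \<union> R" using that linear_order_on_subset[OF lin] by auto
    have "\<not> (b < a \<and> a \<in> L \<and> b \<in> L)"
      using that inc linear_order_on_antisym[OF lin] by (auto simp: increasing_on_def)
    moreover have "\<not> (a \<in> R \<and> b \<in> L)"
      using that q(2) linear_order_on_antisym[OF lin] LR by blast
    ultimately show ?thesis using ab that by (auto simp: in_prepend_sorted_iff)
  qed
  ultimately show ?thesis using q(2) by (auto simp: in_prepend_sorted_iff)
qed

lemma linear_order_on_prepend_sorted:
  assumes LR: "\<forall>l\<in>L. \<forall>r\<in>R. l < r" and lin: "linear_order_on R q"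
  shows "linear_order_on (L \<union> R) (prepend_sorted L R q)"
proof (rule linear_order_onI)
  note sub = linear_order_on_subset[OF lin]
  note mem = in_prepend_sorted_iff[of _ _ L R q]
  have not_L: "a \<in> R \<Longrightarrow> a \<notin> L" for a using LR by blast
  have q_R: "x \<in> R" "y \<in> R" if "(x, y) \<in> q" for x y using that sub by auto
  show "prepend_sorted L R q \<subseteq> (L \<union> R) \<times> (L \<union> R)" using sub by (auto simp: prepend_sorted_def)
  show "\<And>x. x \<in> L \<union> R \<Longrightarrow> (x, x) \<in> prepend_sorted L R q"
    using linear_order_on_refl[OF lin] by (auto simp: mem)
  show "(a, c) \<in> prepend_sorted L R q"
    if "(a, b) \<in> prepend_sorted L R q" "(b, c) \<in> prepend_sorted L R q" for a b c
  proof (cases "a \<in> L")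
    case True
    then show ?thesis using that by (auto simp: mem not_L dest: q_R)
  next
    case False
    then have "(a, b) \<in> q" using that(1) by (simp add: mem)
    moreover from this have "(b, c) \<in> q" using that(2) by (auto simp: mem not_L dest: q_R)
    ultimately show ?thesis using linear_order_on_trans[OF lin] by (simp add: mem)
  qed
  show "\<And>a b. (a, b) \<in> prepend_sorted L R q \<Longrightarrow> (b, a) \<in> prepend_sorted L R q \<Longrightarrow> a = b"
    unfolding mem using linear_order_on_antisym[OF lin] by (auto simp: not_L dest: q_R)
  show "\<And>x y. x \<in> L \<union> R \<Longrightarrow> y \<in> L \<union> R \<Longrightarrow> x \<noteq> y \<Longrightarrow>
      (x, y) \<in> prepend_sorted L R q \<or> (y, x) \<in> prepend_sorted L R q"
    unfolding mem using linear_order_on_total[OF lin] by auto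
qed

lemma prepend_sorted_in_adm_orders:
  assumes LR: "\<forall>l\<in>L. \<forall>r\<in>R. l < r" and "q \<in> adm_orders R {}"
  shows "prepend_sorted L R q \<in> adm_orders (L \<union> R) L"
proof -
  from assms have lin: "linear_order_on R q" and adm: "admissible R q"
    by (auto simp: adm_orders_def)
  note mem = in_prepend_sorted_iff[of _ _ L R q]
  have "admissible (L \<union> R) (prepend_sorted L R q)"
    unfolding admissible_def
  proof (intro ballI impI)
    fix i j k assume ijk: "i \<in> L \<union> R" "j \<in> L \<union> R" "k \<in> L \<union> R" "i < j" "j < k"
    show "(even j \<longrightarrow> (i, j) \<in> prepend_sorted L R q \<or> (i, k) \<in> prepend_sorted L R q) \<and>
        (odd j \<longrightarrow> (i, k) \<in> prepend_sorted L R q \<or> (j, k) \<in> prepend_sorted L R q)"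
    proof (cases "i \<in> L")
      case True
      then show ?thesis using ijk by (auto simp: mem)
    next
      case False
      then have "i \<in> R" using ijk by auto
      have below_i: "x < i" if "x \<in> L" for x using LR that \<open>i \<in> R\<close> by blast
      have "j \<in> R" "k \<in> R" using ijk below_i[of j] below_i[of k] by auto
      then show ?thesis
        using adm[unfolded admissible_def, rule_format, of i j k] \<open>i \<in> R\<close> ijk by (auto simp: mem)
    qed
  qed
  moreover have "increasing_on L (prepend_sorted L R q)"
    by (auto simp: increasing_on_def mem)
  ultimately show ?thesis
    using linear_order_on_prepend_sorted[OF LR lin] by (simp add: adm_orders_def)
qed

lemma card_adm_orders_block:
  assumes LR: "\<forall>l\<in>L. \<forall>r\<in>R. l < r"
  shows "card {q \<in> adm_orders (L \<union> R) L. L \<times> R \<subseteq> q} = card (adm_orders R {})"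
proof -
  have "bij_betw (\<lambda>q. Restr q R) {q \<in> adm_orders (L \<union> R) L. L \<times> R \<subseteq> q} (adm_orders R {})"
  proof (rule bij_betw_byWitness[where f' = "prepend_sorted L R"])
    show "\<forall>q\<in>{q \<in> adm_orders (L \<union> R) L. L \<times> R \<subseteq> q}. prepend_sorted L R (Restr q R) = q"
      using prepend_sorted_Restr[OF LR] by blast
    have "L \<inter> R = {}" using LR by blast
    then have "Restr (prepend_sorted L R q) R = q" if "q \<subseteq> R \<times> R" for q
      using that by (auto simp: prepend_sorted_def)
    then show "\<forall>q\<in>adm_orders R {}. Restr (prepend_sorted L R q) R = q"
      by (auto simp: adm_orders_def dest: linear_order_on_subset)
    have "Restr q R \<in> adm_orders R {}" if "q \<in> adm_orders (L \<union> R) L" for q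
      using that linear_order_on_Restr_subset[of "L \<union> R" q R] admissible_Restr[of "L \<union> R" q R]
      by (simp add: adm_orders_def increasing_on_def)
    then show "(\<lambda>q. Restr q R) ` {q \<in> adm_orders (L \<union> R) L. L \<times> R \<subseteq> q} \<subseteq> adm_orders R {}"
      by blast
    have "L \<times> R \<subseteq> prepend_sorted L R q" for q by (auto simp: prepend_sorted_def)
    then show "prepend_sorted L R ` adm_orders R {} \<subseteq> {q \<in> adm_orders (L \<union> R) L. L \<times> R \<subseteq> q}"
      using prepend_sorted_in_adm_orders[OF LR] by blast
  qed
  then show ?thesis by (simp add: bij_betw_same_card)
qed

lemma card_adm_orders_increasing: "card (adm_orders L L) = 1"
  using card_adm_orders_block[of L "{}"] by (simp add: adm_orders_empty)

section \<open>Staircase configurations\<close>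

definition stair_recurrence :: "(nat \<Rightarrow> nat \<Rightarrow> real) \<Rightarrow> bool" where
  "stair_recurrence f \<longleftrightarrow> f 0 0 = 1 \<and> (\<forall>N\<ge>1. f 0 N = 2 * f 1 N) \<and>
     (\<forall>k\<ge>1. f k (2 * k - 1) = 1 \<and> f k (2 * k) = f (k - 1) (2 * k - 2) + 1) \<and>
     (\<forall>k\<ge>1. \<forall>N. 2 * k + 1 \<le> N \<longrightarrow> f k N = f (k - 1) (N - 2) + f 1 (N - 2 * k) + f (k + 1) N)"

lemma stair_recurrenceD:
  assumes "stair_recurrence f"
  shows "f 0 0 = 1"
    and "1 \<le> N \<Longrightarrow> f 0 N = 2 * f 1 N"
    and "1 \<le> k \<Longrightarrow> f k (2 * k - 1) = 1"
    and "1 \<le> k \<Longrightarrow> f k (2 * k) = f (k - 1) (2 * k - 2) + 1"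
    and "1 \<le> k \<Longrightarrow> 2 * k + 1 \<le> N \<Longrightarrow> f k N = f (k - 1) (N - 2) + f 1 (N - 2 * k) + f (k + 1) N"
  using assms unfolding stair_recurrence_def by blast+

text \<open>The recurrence determines \<open>f k N\<close> for \<open>2 k \<le> N + 1\<close> by induction on \<open>N\<close> and, for fixed \<open>N\<close>,
  downwards in \<open>k\<close>.\<close>

lemma stair_recurrence_unique:
  assumes f: "stair_recurrence f" and g: "stair_recurrence g" and "2 * k \<le> Suc N"
  shows "f k N = g k N"
  using \<open>2 * k \<le> Suc N\<close>
proof (induction N arbitrary: k rule: less_induct)
  case (less N)
  note outer = less.IH
  have "\<forall>k. Suc N - 2 * k = d \<longrightarrow> 2 * k \<le> Suc N \<longrightarrow> f k N = g k N" for d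
  proof (induction d rule: less_induct)
    case (less d)
    show ?case
    proof (intro allI impI)
      fix k assume d: "Suc N - 2 * k = d" and k: "2 * k \<le> Suc N"
      consider "k = 0" "N = 0" | "k = 0" "N \<ge> 1" | "k \<ge> 1" "2 * k = Suc N" | "k \<ge> 1" "2 * k = N"
        | "k \<ge> 1" "2 * k + 1 \<le> N"
        using k by linarith
      then show "f k N = g k N"
      proof cases
        case 1
        then show ?thesis using stair_recurrenceD(1)[OF f] stair_recurrenceD(1)[OF g] by simp
      next
        case 2
        have "f 1 N = g 1 N" using less.IH[of "Suc N - 2"] 2 d by auto
        then show ?thesis using stair_recurrenceD(2)[OF f] stair_recurrenceD(2)[OF g] 2 by simp
      next
        case 3
        then have "N = 2 * k - 1" by simp
        then show ?thesis using stair_recurrenceD(3)[OF f 3(1)] stair_recurrenceD(3)[OF g 3(1)] by simp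
      next
        case 4
        have "f (k - 1) (2 * k - 2) = g (k - 1) (2 * k - 2)" using outer[of "2 * k - 2" "k - 1"] 4 by simp
        then show ?thesis
          using stair_recurrenceD(4)[OF f 4(1)] stair_recurrenceD(4)[OF g 4(1)] 4(2) by simp
      next
        case 5
        have "f (k - 1) (N - 2) = g (k - 1) (N - 2)" using outer[of "N - 2" "k - 1"] 5 by simp
        moreover have "f 1 (N - 2 * k) = g 1 (N - 2 * k)" using outer[of "N - 2 * k" 1] 5 by simp
        moreover have "f (k + 1) N = g (k + 1) N" using less.IH[of "Suc N - 2 * (k + 1)"] 5 d by auto
        ultimately show ?thesis using stair_recurrenceD(5)[OF f] stair_recurrenceD(5)[OF g] 5 by simp
      qed
    qed
  qed
  then show ?case using less.prems by blast
qed

text \<open>The element \<open>0\<close> plays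
  the role of \<open>1 \<in> [n]\<close>: \<open>stair_count 1 n = a_count n\<close>.\<close>

definition stair :: "nat \<Rightarrow> nat \<Rightarrow> nat set" where
  "stair k N = {x. x \<le> N \<and> (odd x \<longrightarrow> 2 * k < x)}"

definition evens_below :: "nat \<Rightarrow> nat set" where
  "evens_below k = {x. even x \<and> x < 2 * k}"

definition stair_count :: "nat \<Rightarrow> nat \<Rightarrow> nat" where
  "stair_count k N = card (adm_orders (stair k N) (evens_below k))"

lemma finite_stair: "finite (stair k N)"
  by (rule finite_subset[of _ "{..N}"]) (auto simp: stair_def)

lemma evens_below_subset_stair: "2 * k \<le> Suc N \<Longrightarrow> evens_below k \<subseteq> stair k N"
  by (auto simp: evens_below_def stair_def)

lemma image_add_Collect: "(\<lambda>y. y + c) ` {y. P y} = {x. c \<le> x \<and> P (x - c)}" for c :: nat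
proof (rule set_eqI)
  fix x
  show "x \<in> (\<lambda>y. y + c) ` {y. P y} \<longleftrightarrow> x \<in> {x. c \<le> x \<and> P (x - c)}"
    by (auto intro: rev_image_eqI[of "x - c"])
qed

lemma card_adm_orders_greaterThanAtMost:
  assumes "even c" "c < N"
  shows "card (adm_orders {c<..N} {}) = stair_count 1 (N - c)"
proof -
  define h where "h y = (if y = 0 then Suc c else y + c)" for y
  have "h ` stair 1 (N - c) = {c<..N}"
  proof
    show "h ` stair 1 (N - c) \<subseteq> {c<..N}"
      using assms by (auto simp: h_def stair_def)
    show "{c<..N} \<subseteq> h ` stair 1 (N - c)"
    proof
      fix x assume x: "x \<in> {c<..N}"
      show "x \<in> h ` stair 1 (N - c)"
      proof (cases "x = Suc c")
        case True
        then show ?thesis by (intro rev_image_eqI[of 0]) (simp_all add: h_def stair_def)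
      next
        case False
        with x have "x - c \<in> stair 1 (N - c)" unfolding stair_def by (simp; presburger)
        moreover have "x = h (x - c)" using x False by (simp add: h_def)
        ultimately show ?thesis by blast
      qed
    qed
  qed
  moreover have "h ` evens_below 1 = {Suc c}" by (auto simp: h_def evens_below_def)
  moreover have "card (adm_orders (h ` stair 1 (N - c)) (h ` evens_below 1)) = stair_count 1 (N - c)"
    unfolding stair_count_def
  proof (rule card_adm_orders_image)
    show "strict_mono_on (stair 1 (N - c)) h"
      by (rule strict_mono_onI) (auto simp: h_def stair_def)
    show "\<forall>i\<in>stair 1 (N - c). \<forall>j\<in>stair 1 (N - c). i < j \<longrightarrow> even (h j) = even j"
      using assms by (auto simp: h_def)
    show "evens_below 1 \<subseteq> stair 1 (N - c)" using assms by (intro evens_below_subset_stair) simp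
  qed
  ultimately show ?thesis by (simp add: adm_orders_singleton)
qed

lemma a_count_eq_stair_count: "1 \<le> n \<Longrightarrow> a_count n = stair_count 1 n"
  using card_adm_orders_greaterThanAtMost[of 0 n] atLeastSucAtMost_greaterThanAtMost[of 0 n]
  by (simp add: a_count_def D_X_A_set_eq_adm_orders)

lemma card_adm_orders_top_0:
  assumes "1 \<le> k" "2 * k \<le> N"
  shows "card (adm_orders_top (stair k N) (evens_below k) 0) = stair_count (k - 1) (N - 2)"
proof -
  have shift_stair: "stair k N - {0} = (\<lambda>y. y + 2) ` stair (k - 1) (N - 2)"
    unfolding stair_def image_add_Collect using assms by (auto; presburger)
  have shift_evens: "evens_below k - {0} = (\<lambda>y. y + 2) ` evens_below (k - 1)"
    unfolding evens_below_def image_add_Collect using assms by (auto; presburger)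
  have "card (adm_orders_top (stair k N) (evens_below k) 0)
      = card {q \<in> adm_orders (stair k N - {0}) (evens_below k - {0}). top_admissible (stair k N) 0 q}"
    using assms by (intro card_adm_orders_top evens_below_subset_stair) (auto simp: stair_def)
  also have "\<dots> = card (adm_orders ((\<lambda>y. y + 2) ` stair (k - 1) (N - 2)) ((\<lambda>y. y + 2) ` evens_below (k - 1)))"
    unfolding shift_stair shift_evens by (simp add: top_admissible_def)
  also have "\<dots> = stair_count (k - 1) (N - 2)"
    unfolding stair_count_def using assms
    by (intro card_adm_orders_image evens_below_subset_stair) (auto intro: strict_mono_onI)
  finally show ?thesis .
qed

lemma stair_Diff_2k: "2 * k \<le> N \<Longrightarrow> stair k N - {2 * k} = evens_below k \<union> {2 * k<..N}"
  by (auto simp: stair_def evens_below_def; presburger)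

lemma top_admissible_stair_2k_iff:
  assumes "increasing_on (evens_below k) q"
  shows "top_admissible (stair k N) (2 * k) q \<longleftrightarrow> evens_below k \<times> {2 * k<..N} \<subseteq> q"
proof
  assume "top_admissible (stair k N) (2 * k) q"
  then have "(i, j) \<in> q" if "i \<in> stair k N" "j \<in> stair k N" "i < 2 * k" "2 * k < j" for i j
    using that unfolding top_admissible_def by simp
  then show "evens_below k \<times> {2 * k<..N} \<subseteq> q"
    by (auto simp: stair_def evens_below_def)
next
  assume across: "evens_below k \<times> {2 * k<..N} \<subseteq> q"
  have "even j \<and> (i, j) \<in> q" if "i \<in> stair k N" "j \<in> stair k N" "i < j" "j < 2 * k" for i j
    using that assms by (auto simp: stair_def evens_below_def increasing_on_def)
  moreover have "(i, j) \<in> q" if "i \<in> stair k N" "j \<in> stair k N" "i < 2 * k" "2 * k < j" for i j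
    using that across by (auto simp: stair_def evens_below_def)
  ultimately show "top_admissible (stair k N) (2 * k) q"
    unfolding top_admissible_def by blast
qed

lemma card_adm_orders_top_2k:
  assumes "2 * k \<le> N"
  shows "card (adm_orders_top (stair k N) (evens_below k) (2 * k)) = card (adm_orders {2 * k<..N} {})"
proof -
  have "card (adm_orders_top (stair k N) (evens_below k) (2 * k)) = card
      {q \<in> adm_orders (stair k N - {2 * k}) (evens_below k - {2 * k}). top_admissible (stair k N) (2 * k) q}"
    using assms by (intro card_adm_orders_top evens_below_subset_stair) (auto simp: stair_def evens_below_def)
  also have "\<dots> = card {q \<in> adm_orders (evens_below k \<union> {2 * k<..N}) (evens_below k).
      evens_below k \<times> {2 * k<..N} \<subseteq> q}"
  proof -
    have "evens_below k - {2 * k} = evens_below k" by (auto simp: evens_below_def)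
    then show ?thesis
      using stair_Diff_2k[OF assms] top_admissible_stair_2k_iff
      by (simp add: adm_orders_def cong: conj_cong)
  qed
  also have "\<dots> = card (adm_orders {2 * k<..N} {})"
    by (rule card_adm_orders_block) (auto simp: evens_below_def)
  finally show ?thesis .
qed

lemma card_adm_orders_top_Suc_2k:
  assumes "2 * k + 1 \<le> N"
  shows "card (adm_orders_top (stair k N) (evens_below k) (2 * k + 1)) = stair_count (k + 1) N"
proof -
  define S C where "S = stair k N" and "C = evens_below k"
  have CS: "C \<subseteq> S" unfolding C_def S_def using assms by (intro evens_below_subset_stair) simp
  have "2 * k + 1 \<in> S" "2 * k + 1 \<notin> C" using assms by (simp_all add: S_def C_def stair_def evens_below_def)
  have S_minus: "S - {2 * k + 1} = stair (k + 1) N"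
    by (auto simp: S_def stair_def; presburger)
  have evens: "evens_below (k + 1) = {y \<in> S. y < 2 * k + 1}"
    using assms by (auto simp: S_def stair_def evens_below_def; presburger)
  have S_even: "even j" if "j \<in> S" "j < 2 * k + 1" for j
    using that by (auto simp: S_def stair_def)
  have C_below: "C \<subseteq> {y \<in> S. y < 2 * k + 1}"
    using CS by (auto simp: C_def evens_below_def)
  have "increasing_on C q \<and> top_admissible S (2 * k + 1) q \<longleftrightarrow> increasing_on (evens_below (k + 1)) q" for q
  proof
    assume "increasing_on C q \<and> top_admissible S (2 * k + 1) q"
    then show "increasing_on (evens_below (k + 1)) q"
      unfolding evens increasing_on_def top_admissible_def by blast
  next
    assume inc: "increasing_on (evens_below (k + 1)) q"
    have "increasing_on C q"
      using inc C_below unfolding evens increasing_on_def by blast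
    moreover have "even j \<and> (i, j) \<in> q" if "i \<in> S" "j \<in> S" "i < j" "j < 2 * k + 1" for i j
      using that S_even[of j] inc unfolding evens increasing_on_def by simp
    ultimately show "increasing_on C q \<and> top_admissible S (2 * k + 1) q"
      by (simp add: top_admissible_def)
  qed
  then have "{q \<in> adm_orders (S - {2 * k + 1}) (C - {2 * k + 1}). top_admissible S (2 * k + 1) q}
      = adm_orders (stair (k + 1) N) (evens_below (k + 1))"
    unfolding S_minus adm_orders_def using \<open>2 * k + 1 \<notin> C\<close> by auto
  moreover have "card (adm_orders_top S C (2 * k + 1))
      = card {q \<in> adm_orders (S - {2 * k + 1}) (C - {2 * k + 1}). top_admissible S (2 * k + 1) q}"
    using card_adm_orders_top[OF \<open>2 * k + 1 \<in> S\<close> CS] \<open>2 * k + 1 \<notin> C\<close> by blast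
  ultimately show ?thesis unfolding S_def C_def stair_count_def by simp
qed

lemma stair_count_diag_pred: "1 \<le> k \<Longrightarrow> stair_count k (2 * k - 1) = 1"
proof -
  assume "1 \<le> k"
  then have "stair k (2 * k - 1) = evens_below k"
    by (auto simp: stair_def evens_below_def; presburger)
  then show ?thesis by (simp add: stair_count_def card_adm_orders_increasing)
qed

lemma stair_count_0_0: "stair_count 0 0 = 1"
proof -
  have "stair 0 0 = {0}" "evens_below 0 = {}" by (auto simp: stair_def evens_below_def)
  then show ?thesis
    using card_adm_orders_increasing[of "{0}"] by (simp add: stair_count_def adm_orders_singleton)
qed

lemma stair_count_diag:
  assumes "1 \<le> k"
  shows "stair_count k (2 * k) = stair_count (k - 1) (2 * k - 2) + 1"
proof -
  define S C where "S = stair k (2 * k)" and "C = evens_below k"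
  have "stair_count k (2 * k) = (\<Sum>x\<in>{0, 2 * k}. card (adm_orders_top S C x))"
    unfolding stair_count_def S_def[symmetric] C_def[symmetric]
  proof (rule card_adm_orders_sum_tops)
    show "finite S" "{0, 2 * k} \<subseteq> S" "{0, 2 * k} \<noteq> {}" by (auto simp: S_def finite_stair stair_def)
    fix x assume "x \<in> S - {0, 2 * k}"
    then have "0 \<in> C" "x \<in> C" "0 < x" using assms by (auto simp: S_def C_def stair_def evens_below_def)
    moreover have "C \<subseteq> S" unfolding S_def C_def by (rule evens_below_subset_stair) simp
    ultimately show "adm_orders_top S C x = {}" by (rule adm_orders_top_increasing_empty)
  qed
  also have "\<dots> = stair_count (k - 1) (2 * k - 2) + card (adm_orders {2 * k<..2 * k} {})"
    using assms card_adm_orders_top_0[of k "2 * k"] card_adm_orders_top_2k[of k "2 * k"]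
    by (simp add: S_def C_def)
  finally show ?thesis by (simp add: adm_orders_empty)
qed

lemma stair_count_step:
  assumes "1 \<le> k" "2 * k + 1 \<le> N"
  shows "stair_count k N = stair_count (k - 1) (N - 2) + stair_count 1 (N - 2 * k) + stair_count (k + 1) N"
proof -
  define S C where "S = stair k N" and "C = evens_below k"
  have "stair_count k N = (\<Sum>x\<in>{0, 2 * k, 2 * k + 1}. card (adm_orders_top S C x))"
    unfolding stair_count_def S_def[symmetric] C_def[symmetric]
  proof (rule card_adm_orders_sum_tops)
    show "finite S" "{0, 2 * k, 2 * k + 1} \<subseteq> S" "{0, 2 * k, 2 * k + 1} \<noteq> {}"
      using assms by (auto simp: S_def finite_stair stair_def)
    fix x assume x: "x \<in> S - {0, 2 * k, 2 * k + 1}"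
    show "adm_orders_top S C x = {}"
    proof (cases "x < 2 * k")
      case True
      then have "0 \<in> C" "x \<in> C" "0 < x" using x assms by (auto simp: S_def C_def stair_def evens_below_def)
      moreover have "C \<subseteq> S" unfolding S_def C_def using assms by (intro evens_below_subset_stair) simp
      ultimately show ?thesis by (rule adm_orders_top_increasing_empty)
    next
      case False
      then have "0 \<in> S" "2 * k + 1 \<in> S" "x \<in> S" "0 < 2 * k + 1" "2 * k + 1 < x" "odd (2 * k + 1)"
        using x assms by (auto simp: S_def stair_def)
      then show ?thesis by (rule adm_orders_top_odd_below_empty)
    qed
  qed
  also have "\<dots> = stair_count (k - 1) (N - 2) + card (adm_orders {2 * k<..N} {}) + stair_count (k + 1) N"
    using assms card_adm_orders_top_0[of k N] card_adm_orders_top_2k[of k N] card_adm_orders_top_Suc_2k[of k N]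
    by (simp add: S_def C_def)
  finally show ?thesis
    using card_adm_orders_greaterThanAtMost[of "2 * k" N] assms by simp
qed

lemma stair_count_0_left:
  assumes "1 \<le> N"
  shows "stair_count 0 N = 2 * stair_count 1 N"
proof -
  define S where "S = stair 0 N"
  have "evens_below 0 = {}" by (simp add: evens_below_def)
  have "stair_count 0 N = (\<Sum>x\<in>{0, 1}. card (adm_orders_top S {} x))"
    unfolding stair_count_def S_def[symmetric] \<open>evens_below 0 = {}\<close>
  proof (rule card_adm_orders_sum_tops)
    show "finite S" "{0, 1} \<subseteq> S" "{0, 1} \<noteq> {}" using assms by (auto simp: S_def finite_stair stair_def)
    fix x assume "x \<in> S - {0, 1}"
    then have "0 \<in> S" "1 \<in> S" "x \<in> S" "0 < (1 :: nat)" "1 < x" "odd (1 :: nat)"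
      using assms by (auto simp: S_def stair_def)
    then show "adm_orders_top S {} x = {}" by (rule adm_orders_top_odd_below_empty)
  qed
  moreover have "card (adm_orders_top S {} 0) = stair_count 1 N"
  proof -
    have "S - {0} = {0<..N}" by (auto simp: S_def stair_def)
    then have "card (adm_orders_top S {} 0) = card (adm_orders {0<..N} {})"
      using card_adm_orders_top[of 0 S "{}"] by (simp add: S_def stair_def top_admissible_def)
    then show ?thesis using card_adm_orders_greaterThanAtMost[of 0 N] assms by simp
  qed
  moreover have "card (adm_orders_top S {} 1) = stair_count 1 N"
    using card_adm_orders_top_Suc_2k[of 0 N] assms \<open>evens_below 0 = {}\<close> by (simp add: S_def)
  ultimately show ?thesis by simp
qed

lemma stair_recurrence_stair_count: "stair_recurrence (\<lambda>k N. real (stair_count k N))"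
  unfolding stair_recurrence_def
  using stair_count_0_0 stair_count_0_left stair_count_diag_pred stair_count_diag stair_count_step
  by (simp add: of_nat_add[symmetric] of_nat_mult[symmetric] del: of_nat_add of_nat_mult)

section \<open>Solving the recurrence with power series\<close>

fun catalan :: "nat \<Rightarrow> real" where
  "catalan 0 = 1"
| "catalan (Suc n) = (\<Sum>i\<le>n. catalan i * catalan (n - i))"

definition catalan_fps :: "real fps" where
  "catalan_fps = Abs_fps catalan"

lemma catalan_fps_eq: "catalan_fps = 1 + fps_X * catalan_fps ^ 2"
proof (rule fps_ext)
  fix n
  show "fps_nth catalan_fps n = fps_nth (1 + fps_X * catalan_fps ^ 2) n"
  proof (cases n)
    case (Suc m)
    have "fps_nth (fps_X * catalan_fps ^ 2) n = fps_nth (catalan_fps * catalan_fps) m"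
      using Suc by (simp add: power2_eq_square del: fps_mult_nth_0)
    also have "\<dots> = catalan n" using Suc by (simp add: fps_mult_nth catalan_fps_def atLeast0AtMost)
    finally show ?thesis using Suc by (simp add: catalan_fps_def)
  qed (simp add: catalan_fps_def)
qed

lemma catalan_fps_power_Suc: "catalan_fps ^ Suc k = catalan_fps ^ k + fps_X * catalan_fps ^ Suc (Suc k)"
proof -
  have "catalan_fps ^ Suc k = catalan_fps ^ k * catalan_fps" by (simp add: power_Suc2)
  also have "\<dots> = catalan_fps ^ k * (1 + fps_X * catalan_fps ^ 2)" using catalan_fps_eq by simp
  finally show ?thesis by (simp add: algebra_simps power2_eq_square)
qed

lemma fps_nth_catalan_fps_power_0: "fps_nth (catalan_fps ^ k) 0 = 1"
  by (simp add: fps_nth_power_0 catalan_fps_def)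

lemma fps_nth_catalan_fps_power_1: "fps_nth (catalan_fps ^ k) (Suc 0) = real k"
proof (induction k)
  case (Suc k)
  have "fps_nth catalan_fps 0 = 1" "fps_nth catalan_fps (Suc 0) = 1"
    by (simp_all add: catalan_fps_def)
  moreover have "catalan_fps ^ Suc k = catalan_fps ^ k * catalan_fps" by (simp add: power_Suc2)
  ultimately show ?case
    using Suc by (simp add: fps_nth_catalan_fps_power_0)
qed simp

text \<open>\<open>a (2 m) = bseq m\<close> and \<open>a (2 m + 1) = 2 bseq m\<close>, see \<open>a_count_even\<close> and \<open>a_count_odd\<close>.\<close>

fun bseq :: "nat \<Rightarrow> real" where
  "bseq 0 = 1"
| "bseq (Suc 0) = 2"
| "bseq (Suc (Suc 0)) = 9"
| "bseq (Suc (Suc (Suc m))) = 4 * bseq (Suc (Suc m)) + 4 * bseq (Suc m) - catalan (Suc (Suc m))"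

definition bseq_fps :: "real fps" where
  "bseq_fps = Abs_fps bseq"

lemma bseq_fps_eq:
  "(2 * bseq_fps - 1) * (1 - 4 * fps_X - 4 * fps_X ^ 2) = 1 + 2 * fps_X - 2 * fps_X * catalan_fps"
proof -
  define G where "G = fps_const 2 * bseq_fps - 1"
  have "2 * bseq_fps - 1 = G" by (simp add: G_def numeral_fps_const)
  then have lhs: "(2 * bseq_fps - 1) * (1 - 4 * fps_X - 4 * fps_X ^ 2) =
      G - fps_X * (fps_const 4 * G) - fps_X * (fps_X * (fps_const 4 * G))"
    by (simp add: algebra_simps power2_eq_square numeral_fps_const)
  have rhs: "1 + 2 * fps_X - 2 * fps_X * catalan_fps = 1 + fps_X * (fps_const 2 - fps_const 2 * catalan_fps)"
    by (simp add: algebra_simps numeral_fps_const)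
  have G_nth: "fps_nth G n = 2 * bseq n - (if n = 0 then 1 else 0)" for n
    by (simp add: G_def bseq_fps_def)
  show ?thesis
    unfolding lhs rhs
  proof (rule fps_ext)
    fix n
    consider "n = 0" | "n = 1" | "n = 2" | m where "n = Suc (Suc (Suc m))"
      by (cases n; cases "n - 1"; cases "n - 2") auto
    then show "fps_nth (G - fps_X * (fps_const 4 * G) - fps_X * (fps_X * (fps_const 4 * G))) n =
        fps_nth (1 + fps_X * (fps_const 2 - fps_const 2 * catalan_fps)) n"
    proof cases
      case 4
      then show ?thesis by (simp add: G_nth catalan_fps_def algebra_simps)
    qed (simp_all add: G_nth catalan_fps_def numeral_2_eq_2)
  qed
qed

definition stair_fps :: "real fps" where
  "stair_fps = bseq_fps * (1 + 2 * fps_X) - fps_X"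

lemma stair_fps_mult_catalan_fps: "stair_fps * catalan_fps = 2 * bseq_fps - 1"
proof -
  define K :: "real fps" where "K = 1 + 2 * fps_X - 2 * fps_X * catalan_fps"
  have "K \<noteq> 0"
  proof
    assume "K = 0"
    then have "fps_nth K 0 = 0" by simp
    then show False by (simp add: K_def)
  qed
  have "K * (2 - (1 + 2 * fps_X) * catalan_fps) - (1 - 4 * fps_X - 4 * fps_X ^ 2) * catalan_fps
      = 2 * (1 + 2 * fps_X) * (fps_X * catalan_fps ^ 2 - catalan_fps + 1)"
    by (simp add: K_def algebra_simps power2_eq_square)
  also have "fps_X * catalan_fps ^ 2 = catalan_fps - 1"
    using catalan_fps_eq by (metis add_diff_cancel_left')
  finally have K_factor: "K * (2 - (1 + 2 * fps_X) * catalan_fps) = (1 - 4 * fps_X - 4 * fps_X ^ 2) * catalan_fps"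
    by simp
  have "K * ((2 * bseq_fps - 1) * (2 - (1 + 2 * fps_X) * catalan_fps))
      = (2 * bseq_fps - 1) * (K * (2 - (1 + 2 * fps_X) * catalan_fps))"
    by (simp add: ac_simps)
  also have "\<dots> = (2 * bseq_fps - 1) * ((1 - 4 * fps_X - 4 * fps_X ^ 2) * catalan_fps)"
    by (simp only: K_factor)
  also have "\<dots> = ((2 * bseq_fps - 1) * (1 - 4 * fps_X - 4 * fps_X ^ 2)) * catalan_fps"
    by (simp only: mult.assoc)
  also have "\<dots> = K * catalan_fps" unfolding bseq_fps_eq K_def ..
  finally have "(2 * bseq_fps - 1) * (2 - (1 + 2 * fps_X) * catalan_fps) = catalan_fps"
    using \<open>K \<noteq> 0\<close> by simp
  then have "2 * (stair_fps * catalan_fps - (2 * bseq_fps - 1)) = 0"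
    by (simp add: stair_fps_def algebra_simps)
  moreover have "(2 :: real fps) \<noteq> 0"
  proof
    assume "(2 :: real fps) = 0"
    then have "fps_nth (2 :: real fps) 0 = 0" by simp
    then show False by (simp add: numeral_fps_const)
  qed
  ultimately have "stair_fps * catalan_fps - (2 * bseq_fps - 1) = 0"
    using mult_eq_0_iff by blast
  then show ?thesis by simp
qed

text \<open>The staircase numbers are read off the coefficients of \<open>stair_fps * catalan_fps ^ k\<close>.\<close>

definition stair_coeff :: "nat \<Rightarrow> nat \<Rightarrow> real" where
  "stair_coeff k d = fps_nth (stair_fps * catalan_fps ^ k) (Suc d) - bseq (Suc d)"

lemma stair_coeff_1: "stair_coeff 1 d = bseq (Suc d)"
proof -
  have "fps_nth (stair_fps * catalan_fps ^ 1) (Suc d) = fps_nth (2 * bseq_fps - 1) (Suc d)"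
    by (simp only: power_one_right stair_fps_mult_catalan_fps)
  also have "\<dots> = 2 * bseq (Suc d)" by (simp add: bseq_fps_def numeral_fps_const)
  finally show ?thesis by (simp add: stair_coeff_def)
qed

lemma fps_nth_stair_fps:
  "fps_nth stair_fps 0 = 1" "fps_nth stair_fps (Suc m) = bseq (Suc m) + 2 * bseq m - (if m = 0 then 1 else 0)"
proof -
  have eq: "stair_fps = bseq_fps + fps_X * (2 * bseq_fps - 1)" by (simp add: stair_fps_def algebra_simps)
  show "fps_nth stair_fps 0 = 1" "fps_nth stair_fps (Suc m) = bseq (Suc m) + 2 * bseq m - (if m = 0 then 1 else 0)"
    unfolding eq by (simp_all add: bseq_fps_def numeral_fps_const)
qed

lemma stair_coeff_0_right: "stair_coeff k 0 = real k + 1"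
  by (simp add: stair_coeff_def fps_nth_stair_fps fps_nth_catalan_fps_power_0
      fps_nth_catalan_fps_power_1)

lemma stair_coeff_0_left: "stair_coeff 0 (Suc d) = 2 * stair_coeff 1 d"
proof -
  have "stair_coeff 0 (Suc d) = 2 * bseq (Suc d)"
    by (simp add: stair_coeff_def fps_nth_stair_fps)
  then show ?thesis by (simp only: stair_coeff_1)
qed

lemma stair_coeff_Suc:
  "stair_coeff (Suc k) (Suc d) = stair_coeff k (Suc d) + stair_coeff 1 d + stair_coeff (Suc (Suc k)) d"
proof -
  have "stair_fps * catalan_fps ^ Suc k =
      stair_fps * catalan_fps ^ k + fps_X * (stair_fps * catalan_fps ^ Suc (Suc k))"
    by (subst catalan_fps_power_Suc) (simp add: algebra_simps)
  then have "fps_nth (stair_fps * catalan_fps ^ Suc k) (Suc (Suc d)) =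
      fps_nth (stair_fps * catalan_fps ^ k) (Suc (Suc d)) + fps_nth (stair_fps * catalan_fps ^ Suc (Suc k)) (Suc d)"
    by (simp only: fps_add_nth fps_X_mult_nth) simp
  then have "stair_coeff (Suc k) (Suc d) = stair_coeff k (Suc d) + bseq (Suc d) + stair_coeff (Suc (Suc k)) d"
    unfolding stair_coeff_def by linarith
  then show ?thesis by (simp only: stair_coeff_1)
qed

definition stair_value :: "nat \<Rightarrow> nat \<Rightarrow> real" where
  "stair_value k N = (if N < 2 * k then 1 else if even N then stair_coeff k (N div 2 - k)
     else 2 * stair_coeff k (N div 2 - k))"

lemma stair_value_above: "r < 2 \<Longrightarrow> stair_value k (2 * (k + d) + r) = (1 + real r) * stair_coeff k d"
  by (auto simp: stair_value_def less_2_cases_iff)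

lemma stair_value_0_left:
  assumes "1 \<le> N"
  shows "stair_value 0 N = 2 * stair_value 1 N"
proof (cases "N = 1")
  case True
  then show ?thesis by (simp add: stair_value_def stair_coeff_0_right)
next
  case False
  with assms have "N = 2 * Suc (N div 2 - 1) + N mod 2" "N mod 2 < 2" by presburger+
  then obtain d r where N: "N = 2 * Suc d + r" and r: "r < 2" by blast
  have "stair_value 0 N = (1 + real r) * stair_coeff 0 (Suc d)"
    using stair_value_above[OF r, of 0 "Suc d"] N by simp
  moreover have "stair_value 1 N = (1 + real r) * stair_coeff 1 d"
    using stair_value_above[OF r, of 1 d] N by simp
  ultimately show ?thesis by (simp add: stair_coeff_0_left)
qed

lemma stair_value_diag:
  assumes "1 \<le> k"
  shows "stair_value k (2 * k) = stair_value (k - 1) (2 * k - 2) + 1"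
proof -
  have "stair_value k (2 * k) = real k + 1"
    using stair_value_above[of 0 k 0] by (simp add: stair_coeff_0_right)
  moreover have "2 * k - 2 = 2 * (k - 1 + 0) + 0" using assms by simp
  then have "stair_value (k - 1) (2 * k - 2) = real (k - 1) + 1"
    using stair_value_above[of 0 "k - 1" 0] by (simp only:) (simp add: stair_coeff_0_right)
  ultimately show ?thesis using assms by (simp add: of_nat_diff)
qed

lemma stair_value_step:
  assumes "1 \<le> k" "2 * k + 1 \<le> N"
  shows "stair_value k N = stair_value (k - 1) (N - 2) + stair_value 1 (N - 2 * k) + stair_value (k + 1) N"
proof -
  obtain k' where k: "k = Suc k'" using assms(1) by (cases k) auto
  show ?thesis
  proof (cases "N = 2 * k + 1")
    case True
    then have "N - 2 = 2 * (k' + 0) + 1" "N - 2 * k = 1" "N = 2 * (k + 0) + 1" using k by simp_all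
    then show ?thesis
      using stair_value_above[of 1 k 0] stair_value_above[of 1 k' 0]
      by (simp add: stair_value_def stair_coeff_0_right k)
  next
    case False
    with assms(2) have "N = 2 * (k + Suc (N div 2 - k - 1)) + N mod 2" "N mod 2 < 2" by presburger+
    then obtain d r where N: "N = 2 * (k + Suc d) + r" and r: "r < 2" by blast
    have e: "N - 2 = 2 * (k' + Suc d) + r" "N - 2 * k = 2 * (1 + d) + r" "N = 2 * (k + 1 + d) + r"
      using N k by simp_all
    have "stair_value k N = (1 + real r) * stair_coeff k (Suc d)"
      unfolding N by (rule stair_value_above[OF r])
    moreover have "stair_value (k - 1) (N - 2) = (1 + real r) * stair_coeff k' (Suc d)"
      unfolding e(1) k diff_Suc_1 by (rule stair_value_above[OF r])
    moreover have "stair_value 1 (N - 2 * k) = (1 + real r) * stair_coeff 1 d"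
      unfolding e(2) by (rule stair_value_above[OF r])
    moreover have "stair_value (k + 1) N = (1 + real r) * stair_coeff (k + 1) d"
      unfolding e(3) by (rule stair_value_above[OF r])
    ultimately show ?thesis using stair_coeff_Suc[of k' d] by (simp add: k distrib_left)
  qed
qed

lemma stair_recurrence_stair_value: "stair_recurrence stair_value"
  unfolding stair_recurrence_def
  using stair_value_above[of 0 0 0] stair_value_0_left stair_value_diag stair_value_step
  by (auto simp: stair_value_def stair_coeff_0_right)

section \<open>Asymptotics\<close>

lemma catalan_nonneg: "catalan n \<ge> 0"
proof (induction n rule: less_induct)
  case (less n)
  then show ?case by (cases n) (auto intro!: sum_nonneg)
qed

lemma sum_convolution_le_square:
  fixes a :: "nat \<Rightarrow> real"
  assumes "\<And>n. a n \<ge> 0"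
  shows "(\<Sum>n<N. \<Sum>i\<le>n. a i * a (n - i)) \<le> (\<Sum>i<N. a i) ^ 2"
proof -
  have "(\<Sum>n<N. \<Sum>i\<le>n. a i * a (n - i)) = (\<Sum>(i, j)\<in>{(i, j). i + j < N}. a i * a j)"
    by (rule sum.triangle_reindex[symmetric])
  also have "\<dots> \<le> (\<Sum>(i, j)\<in>{..<N} \<times> {..<N}. a i * a j)"
    by (rule sum_mono2) (auto simp: assms)
  also have "\<dots> = (\<Sum>i<N. a i) ^ 2"
    by (simp add: power2_eq_square sum_product sum.cartesian_product)
  finally show ?thesis .
qed

text \<open>\<open>x0 = 1 / (2 + 2 sqrt 2)\<close> is the reciprocal of the growth rate; it is the positive root of
  \<open>4 x\<^sup>2 + 4 x = 1\<close>, the denominator of \<open>bseq_fps\<close>.\<close>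

definition x0 :: real where
  "x0 = (sqrt 2 - 1) / 2"

lemma x0_pos: "x0 > 0"
  by (simp add: x0_def)

lemma x0_mult_growth: "x0 * (2 + 2 * sqrt 2) = 1"
  by (simp add: x0_def field_simps)

definition catalan_x0 :: "nat \<Rightarrow> real" where
  "catalan_x0 n = catalan n * x0 ^ n"

lemma catalan_x0_nonneg: "catalan_x0 n \<ge> 0"
  using catalan_nonneg x0_pos by (simp add: catalan_x0_def)

lemma catalan_x0_convolution: "(\<Sum>i\<le>n. catalan_x0 i * catalan_x0 (n - i)) = x0 ^ n * catalan (Suc n)"
proof -
  have "(\<Sum>i\<le>n. catalan_x0 i * catalan_x0 (n - i)) = (\<Sum>i\<le>n. x0 ^ n * (catalan i * catalan (n - i)))"
    by (rule sum.cong) (auto simp: catalan_x0_def power_add[symmetric])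
  then show ?thesis by (simp add: sum_distrib_left)
qed

text \<open>Bounding the partial sums by \<open>sqrt 2\<close> works because \<open>sqrt 2\<close> is a fixed point of
  \<open>s \<mapsto> 1 + x0 s\<^sup>2\<close>.\<close>

lemma sum_catalan_x0_le: "(\<Sum>i<N. catalan_x0 i) \<le> sqrt 2"
proof (induction N)
  case (Suc N)
  have "(\<Sum>i<Suc N. catalan_x0 i) = catalan_x0 0 + (\<Sum>n<N. catalan_x0 (Suc n))"
    by (rule sum.lessThan_Suc_shift)
  also have "(\<Sum>n<N. catalan_x0 (Suc n)) = x0 * (\<Sum>n<N. \<Sum>i\<le>n. catalan_x0 i * catalan_x0 (n - i))"
    by (simp only: catalan_x0_convolution) (simp add: catalan_x0_def sum_distrib_left mult_ac)
  also have "\<dots> \<le> x0 * (\<Sum>i<N. catalan_x0 i) ^ 2"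
    using sum_convolution_le_square[of catalan_x0 N] catalan_x0_nonneg x0_pos
    by (simp add: mult_left_mono)
  also have "(\<Sum>i<N. catalan_x0 i) ^ 2 \<le> sqrt 2 ^ 2"
    using Suc sum_nonneg[of "{..<N}" catalan_x0] catalan_x0_nonneg by (intro power_mono) auto
  finally have "(\<Sum>i<Suc N. catalan_x0 i) \<le> catalan_x0 0 + x0 * 2"
    using x0_pos by (simp add: mult_left_mono)
  also have "\<dots> = sqrt 2" by (simp add: catalan_x0_def x0_def field_simps)
  finally show ?case .
qed simp

lemma catalan_x0_sums: "catalan_x0 sums sqrt 2"
proof -
  have summable: "summable catalan_x0"
    using sum_catalan_x0_le catalan_x0_nonneg by (intro summableI_nonneg_bounded) auto
  define s where "s = suminf catalan_x0"
  have "s \<le> sqrt 2" unfolding s_def by (rule suminf_le_const[OF summable sum_catalan_x0_le])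
  have "(\<lambda>k. \<Sum>i\<le>k. catalan_x0 i * catalan_x0 (k - i)) sums (s * s)"
    unfolding s_def using summable catalan_x0_nonneg by (intro Cauchy_product_sums) simp_all
  then have "(\<lambda>k. x0 * (x0 ^ k * catalan (Suc k))) sums (x0 * (s * s))"
    unfolding catalan_x0_convolution by (rule sums_mult)
  then have "(\<lambda>k. catalan_x0 (Suc k)) sums (x0 * (s * s))"
    by (simp add: catalan_x0_def mult_ac)
  then have "s = x0 * (s * s) + 1"
    unfolding s_def sums_Suc_iff by (simp add: sums_iff catalan_x0_def)
  moreover have "x0 * ((s - sqrt 2) * (s - (2 + sqrt 2))) =
      x0 * (s * s) - s * (x0 * (2 + 2 * sqrt 2)) + x0 * (2 + 2 * sqrt 2)"
    by (simp add: algebra_simps)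
  ultimately have "x0 * ((s - sqrt 2) * (s - (2 + sqrt 2))) = 0"
    by (simp add: x0_mult_growth)
  then have "s = sqrt 2 \<or> s = 2 + sqrt 2" using x0_pos by simp
  with \<open>s \<le> sqrt 2\<close> have "s = sqrt 2" by auto
  then show ?thesis using summable_sums[OF summable] by (simp add: s_def)
qed

lemma tendsto_affine_recurrence:
  fixes \<beta> \<zeta> :: "nat \<Rightarrow> real"
  assumes "\<bar>\<theta>\<bar> < 1" and "\<zeta> \<longlonglongrightarrow> Z" and rec: "\<And>m. \<beta> (Suc m) = \<zeta> m + \<theta> * \<beta> m"
  shows "\<beta> \<longlonglongrightarrow> Z / (1 - \<theta>)"
proof (rule LIMSEQ_I)
  fix \<epsilon> :: real assume "\<epsilon> > 0"
  define e where "e m = \<beta> m - Z / (1 - \<theta>)" for m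
  have e_Suc: "e (Suc m) = (\<zeta> m - Z) + \<theta> * e m" for m
    using \<open>\<bar>\<theta>\<bar> < 1\<close> by (simp add: e_def rec field_simps)
  define a where "a = \<bar>\<theta>\<bar>"
  have "a \<ge> 0" "a < 1" using \<open>\<bar>\<theta>\<bar> < 1\<close> by (auto simp: a_def)
  define \<delta> where "\<delta> = \<epsilon> * (1 - a) / 2"
  have "\<delta> > 0" using \<open>\<epsilon> > 0\<close> \<open>a < 1\<close> by (simp add: \<delta>_def)
  then obtain M where M: "\<And>m. m \<ge> M \<Longrightarrow> \<bar>\<zeta> m - Z\<bar> < \<delta>"
    using LIMSEQ_D[OF \<open>\<zeta> \<longlonglongrightarrow> Z\<close>] by auto
  have bound: "\<bar>e (M + n)\<bar> \<le> a ^ n * \<bar>e M\<bar> + \<epsilon> / 2" for n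
  proof (induction n)
    case (Suc n)
    have "\<bar>e (M + Suc n)\<bar> \<le> \<bar>\<zeta> (M + n) - Z\<bar> + a * \<bar>e (M + n)\<bar>"
      using abs_triangle_ineq[of "\<zeta> (M + n) - Z" "\<theta> * e (M + n)"]
      by (simp add: a_def e_Suc abs_mult)
    also have "\<dots> \<le> \<delta> + a * (a ^ n * \<bar>e M\<bar> + \<epsilon> / 2)"
      using M[of "M + n"] Suc \<open>a \<ge> 0\<close> by (intro add_mono mult_left_mono) auto
    also have "\<dots> = a ^ Suc n * \<bar>e M\<bar> + \<epsilon> / 2" by (simp add: \<delta>_def field_simps)
    finally show ?case .
  qed (use \<open>\<epsilon> > 0\<close> in simp)
  have "(\<lambda>n. a ^ n * \<bar>e M\<bar>) \<longlonglongrightarrow> 0"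
    using \<open>a \<ge> 0\<close> \<open>a < 1\<close> by (intro tendsto_mult_left_zero LIMSEQ_power_zero) simp
  then obtain N where N: "\<And>n. n \<ge> N \<Longrightarrow> a ^ n * \<bar>e M\<bar> < \<epsilon> / 2"
    using LIMSEQ_D[of _ 0 "\<epsilon> / 2"] \<open>\<epsilon> > 0\<close> by force
  show "\<exists>n0. \<forall>n\<ge>n0. norm (\<beta> n - Z / (1 - \<theta>)) < \<epsilon>"
  proof (intro exI allI impI)
    fix n assume "n \<ge> M + N"
    then have "\<bar>e n\<bar> \<le> a ^ (n - M) * \<bar>e M\<bar> + \<epsilon> / 2" using bound[of "n - M"] by simp
    also have "\<dots> < \<epsilon>" using N[of "n - M"] \<open>n \<ge> M + N\<close> by (simp add: le_diff_conv2)
    finally show "norm (\<beta> n - Z / (1 - \<theta>)) < \<epsilon>" by (simp add: e_def)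
  qed
qed

text \<open>With \<open>\<rho> = 2 - 2 sqrt 2\<close>, the other root of \<open>t\<^sup>2 = 4 t + 4\<close>, the recurrence of \<open>bseq\<close>
  factors as a first-order recurrence for \<open>bseq (m + 1) - \<rho> bseq m\<close> driven by the Catalan
  numbers; its rescaled form telescopes.\<close>

definition bseq_defect :: "nat \<Rightarrow> real" where
  "bseq_defect m = (bseq (Suc m) - (2 - 2 * sqrt 2) * bseq m) * x0 ^ Suc m"

lemma bseq_defect_Suc_Suc:
  "bseq_defect (Suc (Suc n)) = bseq_defect (Suc n) - x0 * catalan_x0 (Suc (Suc n))"
proof -
  have "bseq_defect (Suc (Suc n)) = (x0 * (2 + 2 * sqrt 2)) * bseq_defect (Suc n)
      - x0 * catalan_x0 (Suc (Suc n))"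
    by (simp add: bseq_defect_def catalan_x0_def algebra_simps)
  then show ?thesis by (simp only: x0_mult_growth mult_1)
qed

lemma bseq_defect_tendsto: "bseq_defect \<longlonglongrightarrow> sqrt 2 - 1"
proof -
  define K where "K = bseq_defect 1 + x0 * (1 + x0)"
  have telescope: "bseq_defect (Suc n) = K - x0 * (\<Sum>i<n + 2. catalan_x0 i)" for n
  proof (induction n)
    case 0
    then show ?case by (simp add: K_def catalan_x0_def numeral_2_eq_2)
  next
    case (Suc n)
    then show ?case using bseq_defect_Suc_Suc[of n] by (simp add: algebra_simps)
  qed
  have "(\<lambda>n. \<Sum>i<n. catalan_x0 i) \<longlonglongrightarrow> sqrt 2"
    using catalan_x0_sums by (simp add: sums_def)
  then have "(\<lambda>n. \<Sum>i<n + 2. catalan_x0 i) \<longlonglongrightarrow> sqrt 2"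
    by (rule LIMSEQ_ignore_initial_segment)
  then have "(\<lambda>n. bseq_defect (Suc n)) \<longlonglongrightarrow> K - x0 * sqrt 2"
    unfolding telescope by (intro tendsto_intros)
  moreover have "K - x0 * sqrt 2 = sqrt 2 - 1"
    by (simp add: K_def bseq_defect_def x0_def power2_eq_square field_simps)
  ultimately show ?thesis by (simp add: LIMSEQ_imp_Suc)
qed

lemma bseq_x0_tendsto: "(\<lambda>m. bseq m * x0 ^ m) \<longlonglongrightarrow> sqrt 2 / 4"
proof -
  define \<theta> where "\<theta> = (2 - 2 * sqrt 2) * x0"
  have \<theta>: "\<theta> = 2 * sqrt 2 - 3" by (simp add: \<theta>_def x0_def field_simps)
  have "1 < sqrt 2" by (rule real_less_rsqrt) simp
  have "sqrt 2 < 3 / 2" by (rule real_less_lsqrt) (simp_all add: power2_eq_square)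
  have "\<bar>\<theta>\<bar> < 1"
    unfolding \<theta> abs_less_iff using \<open>1 < sqrt 2\<close> \<open>sqrt 2 < 3 / 2\<close> by linarith
  moreover have "bseq (Suc m) * x0 ^ Suc m = bseq_defect m + \<theta> * (bseq m * x0 ^ m)" for m
    by (simp add: bseq_defect_def \<theta>_def algebra_simps)
  ultimately have "(\<lambda>m. bseq m * x0 ^ m) \<longlonglongrightarrow> (sqrt 2 - 1) / (1 - \<theta>)"
    using bseq_defect_tendsto by (intro tendsto_affine_recurrence)
  moreover have "(sqrt 2 - 1) / (1 - \<theta>) = sqrt 2 / 4"
  proof -
    have "1 - \<theta> = 4 - 2 * sqrt 2" "4 - 2 * sqrt 2 \<noteq> 0"
      using \<open>sqrt 2 < 3 / 2\<close> by (simp_all add: \<theta>)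
    moreover have "(sqrt 2 - 1) * 4 = sqrt 2 * (4 - 2 * sqrt 2)" by (simp add: algebra_simps)
    ultimately show ?thesis by (simp add: field_simps)
  qed
  ultimately show ?thesis by simp
qed

lemma a_count_eq_stair_value: "1 \<le> n \<Longrightarrow> real (a_count n) = stair_value 1 n"
  using stair_recurrence_unique[OF stair_recurrence_stair_count stair_recurrence_stair_value, of 1 n]
  by (simp add: a_count_eq_stair_count)

lemma a_count_even: "1 \<le> m \<Longrightarrow> real (a_count (2 * m)) = bseq m"
  using a_count_eq_stair_value[of "2 * m"] stair_value_above[of 0 1 "m - 1"] stair_coeff_1[of "m - 1"]
  by simp

lemma a_count_odd: "1 \<le> m \<Longrightarrow> real (a_count (2 * m + 1)) = 2 * bseq m"
  using a_count_eq_stair_value[of "2 * m + 1"] stair_value_above[of 1 1 "m - 1"] stair_coeff_1[of "m - 1"]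
  by simp

lemma a_count_even_x0_tendsto: "(\<lambda>m. real (a_count (2 * m)) * x0 ^ m) \<longlonglongrightarrow> sqrt 2 / 4"
proof -
  have "eventually (\<lambda>m. bseq m * x0 ^ m = real (a_count (2 * m)) * x0 ^ m) at_top"
    using eventually_ge_at_top[of 1] by eventually_elim (simp add: a_count_even)
  with bseq_x0_tendsto show ?thesis by (rule Lim_transform_eventually)
qed

lemma a_count_odd_x0_tendsto: "(\<lambda>m. real (a_count (2 * m + 1)) * x0 ^ m) \<longlonglongrightarrow> sqrt 2 / 2"
proof -
  have "eventually (\<lambda>m. 2 * (bseq m * x0 ^ m) = real (a_count (2 * m + 1)) * x0 ^ m) at_top"
    using eventually_ge_at_top[of 1]
  proof eventually_elim
    case (elim m)
    then show ?case using a_count_odd[OF elim] by simp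
  qed
  with tendsto_mult_left[OF bseq_x0_tendsto, of 2] show ?thesis
    by (auto intro: Lim_transform_eventually)
qed

lemma sqrt_growth_power_even: "sqrt (2 + 2 * sqrt 2) ^ (2 * m) = (1 / x0) ^ m"
proof -
  have "2 + 2 * sqrt 2 = 1 / x0"
    using x0_mult_growth x0_pos by (simp add: field_simps)
  then show ?thesis using x0_pos by (simp add: power_mult less_imp_le)
qed

lemma sqrt_growth_power_odd:
  "sqrt (sqrt 2 - 1) / 2 * sqrt (2 + 2 * sqrt 2) ^ (2 * m + 1) = sqrt 2 / 2 * (1 / x0) ^ m"
proof -
  have "sqrt (sqrt 2 - 1) * sqrt (2 + 2 * sqrt 2) = sqrt ((sqrt 2 - 1) * (2 + 2 * sqrt 2))"
    by (simp add: real_sqrt_mult)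
  also have "(sqrt 2 - 1) * (2 + 2 * sqrt 2) = (2 :: real)" by (simp add: algebra_simps)
  finally have factor: "sqrt (sqrt 2 - 1) * sqrt (2 + 2 * sqrt 2) = sqrt 2" .
  have "sqrt (sqrt 2 - 1) / 2 * sqrt (2 + 2 * sqrt 2) ^ (2 * m + 1)
      = sqrt (sqrt 2 - 1) * sqrt (2 + 2 * sqrt 2) / 2 * sqrt (2 + 2 * sqrt 2) ^ (2 * m)"
    by simp
  then show ?thesis unfolding factor sqrt_growth_power_even .
qed

lemma asymp_equiv_of_tendsto_mult_power:
  fixes f :: "nat \<Rightarrow> real"
  assumes "(\<lambda>m. f m * x ^ m) \<longlonglongrightarrow> c" "c \<noteq> 0" "x \<noteq> 0"
  shows "f \<sim>[at_top] (\<lambda>m. c * (1 / x) ^ m)"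
proof (rule asymp_equivI')
  have "(\<lambda>m. f m * x ^ m / c) \<longlonglongrightarrow> c / c"
    using assms by (intro tendsto_divide tendsto_const) auto
  moreover have "f m / (c * (1 / x) ^ m) = f m * x ^ m / c" for m
    using assms by (simp add: field_simps power_one_over)
  ultimately show "(\<lambda>m. f m / (c * (1 / x) ^ m)) \<longlonglongrightarrow> 1"
    using assms by simp
qed

theorem proposition10:
  shows "(\<lambda>m. real (a_count (2 * m))) \<sim>[at_top]
           (\<lambda>m. sqrt 2 / 4 * sqrt (2 + 2 * sqrt 2) ^ (2 * m)) \<and>
         (\<lambda>m. real (a_count (2 * m + 1))) \<sim>[at_top]
           (\<lambda>m. sqrt (sqrt 2 - 1) / 2 * sqrt (2 + 2 * sqrt 2) ^ (2 * m + 1))"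
proof -
  have "x0 \<noteq> 0" using x0_pos by simp
  show ?thesis
    unfolding sqrt_growth_power_even sqrt_growth_power_odd
    using asymp_equiv_of_tendsto_mult_power[OF a_count_even_x0_tendsto _ \<open>x0 \<noteq> 0\<close>]
      asymp_equiv_of_tendsto_mult_power[OF a_count_odd_x0_tendsto _ \<open>x0 \<noteq> 0\<close>]
    by simp
qed

end
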